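(* Let $f_A,f_R,F,d_a,d_e$ be as in the context and let $\chi\in[0,1)$. There exists no $R\in(0,\frac{d_e}{2}]$ such that the ring state $\delta_{(R,0)}$ is an equilibrium state of the mean-field equation $\partial_t\rho+\nabla\cdot[\rho\,(F(\cdot,T)\ast\rho)]=0$.
   Context: Let $f_R, f_A:[0,\infty)\to\mathbb{R}$ be smooth integrable functions with $f_R\ge 0$ and $f_A\le 0$, such that there is $d_a>0$ with $(f_A+f_R)(\rho)\le 0$ for $\rho>d_a$ and $(f_A+f_R)(\rho)>0$ for $0\le\rho<d_a$. For $\chi\in[0,1]$, $s=(0,1)$, $l=(1,0)$, let $T=\chi\, s\otimes s + l\otimes l$ and $F(d,T) = f_A(|d|)\,T d + f_R(|d|)\,d$ for $d\in\mathbb{R}^2$; assume $F$ is $C^1$ with bounded total derivatives. Assume there is $d_e>d_a$ such that $\chi f_A+f_R$ is strictly decreasing on $[0,d_e]$ for all $\chi\in[0,1]$. A Borel probability measure $\mu$ on $\mathbb{R}^2$ is an equilibrium state if $K(x):=\int_{\mathbb{R}^2}F(x-y,T)\,d\mu(y)$ satisfies $K\in L^1_{loc}(d\mu)$ and $K=0$ on $\mathrm{supp}(\mu)$ $\mu$-a.e. For $R>0$ the ring state $\delta_{(R,0)}$ is the uniform probability measure on the circle $\{(R\cos\phi,R\sin\phi)\}$. *)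

theory Defs
  imports "HOL-Analysis.Analysis" "HOL-Probability.Probability"
begin

definition smooth_on :: "real set \<Rightarrow> (real \<Rightarrow> real) \<Rightarrow> bool" where
  "smooth_on S f \<longleftrightarrow> (\<exists>D :: nat \<Rightarrow> real \<Rightarrow> real. D 0 = f \<and>
     (\<forall>n. \<forall>x\<in>S. (D n has_real_derivative D (Suc n) x) (at x within S)))"

definition tensor :: "real \<times> real \<Rightarrow> real \<times> real \<Rightarrow> real \<times> real \<Rightarrow> real \<times> real" where
  "tensor u v d = (v \<bullet> d) *\<^sub>R u"

definition svec :: "real \<times> real" where "svec = (0, 1)"
definition lvec :: "real \<times> real" where "lvec = (1, 0)"

definition Tmap :: "real \<Rightarrow> real \<times> real \<Rightarrow> real \<times> real" where
  "Tmap chi d = chi *\<^sub>R tensor svec svec d + tensor lvec lvec d"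

definition Fint :: "(real \<Rightarrow> real) \<Rightarrow> (real \<Rightarrow> real) \<Rightarrow> real \<Rightarrow> real \<times> real \<Rightarrow> real \<times> real" where
  "Fint fA fR chi d = fA (norm d) *\<^sub>R Tmap chi d + fR (norm d) *\<^sub>R d"

definition msupport :: "(real \<times> real) measure \<Rightarrow> (real \<times> real) set" where
  "msupport \<mu> = {x. \<forall>e>0. emeasure \<mu> (ball x e) > 0}"

definition equilibrium_state :: "(real \<times> real \<Rightarrow> real \<times> real) \<Rightarrow> (real \<times> real) measure \<Rightarrow> bool" where
  "equilibrium_state G \<mu> \<longleftrightarrow> prob_space \<mu> \<and> sets \<mu> = sets borel \<and>
     (let K = (\<lambda>x. \<integral>y. G (x - y) \<partial>\<mu>) in
        (\<forall>C. compact C \<longrightarrow> set_integrable \<mu> C K) \<and>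
        (AE x in \<mu>. x \<in> msupport \<mu> \<longrightarrow> K x = 0))"

definition ring_state :: "real \<Rightarrow> (real \<times> real) measure" where
  "ring_state R = distr (uniform_measure lborel {0..<2*pi}) borel (\<lambda>\<phi>. (R * cos \<phi>, R * sin \<phi>))"

end

theory Submission
  imports Defs
begin

text \<open>If the ring of radius \<open>R\<close> were an equilibrium, then by rotational symmetry the mean
field at its point of angle \<open>t\<close> would be \<open>(R cos t \<cdot> M\<^sub>1, R sin t \<cdot> M\<^sub>2) / 2\<pi>\<close>, where
\<open>M\<^sub>1\<close>, \<open>M\<^sub>2\<close> are the moments \<open>\<integral> g(\<rho>(\<psi>)) (1 - cos \<psi>) d\<psi>\<close> over \<open>[0, 2\<pi>]\<close> of
\<open>g = f\<^sub>A + f\<^sub>R\<close> and \<open>g = \<chi> f\<^sub>A + f\<^sub>R\<close>, and \<open>\<rho>(\<psi>) = R \<surd>(2 - 2 cos \<psi>)\<close> is the chord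
length. The field vanishes at some point of the ring off the coordinate axes, so
\<open>M\<^sub>1 = M\<^sub>2 = 0\<close>, and hence the moment of \<open>(1 - \<chi>) f\<^sub>R = (\<chi> f\<^sub>A + f\<^sub>R) - \<chi> (f\<^sub>A + f\<^sub>R)\<close>
vanishes. But \<open>f\<^sub>R \<ge> 0\<close> is strictly decreasing on \<open>[0, d\<^sub>e]\<close> and \<open>R \<surd>2 < 2R \<le> d\<^sub>e\<close>,
so \<open>f\<^sub>R(R \<surd>2) > f\<^sub>R(d\<^sub>e) \<ge> 0\<close> and that moment is positive. Only continuity of
\<open>f\<^sub>A\<close> and \<open>f\<^sub>R\<close>, the sign of \<open>f\<^sub>R\<close> and the \<open>\<chi> = 0\<close> case of the monotonicity
hypothesis are needed.\<close>

lemma smooth_on_imp_continuous_on: "smooth_on S f \<Longrightarrow> continuous_on S f"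
  unfolding smooth_on_def by (metis DERIV_continuous_on)

lemma continuous_on_Fint:
  assumes "continuous_on {0..} fA" "continuous_on {0..} fR"
  shows "continuous_on UNIV (Fint fA fR chi)"
proof -
  have radial: "continuous_on UNIV (\<lambda>d::real \<times> real. f (norm d))" if "continuous_on {0..} f" for f
    by (rule continuous_on_compose2[OF that continuous_on_norm_id]) auto
  show ?thesis
    unfolding Fint_def Tmap_def tensor_def by (intro continuous_intros radial assms)
qed

lemma Fint_components:
  "Fint fA fR chi d =
     ((fA (norm d) + fR (norm d)) * fst d, (chi * fA (norm d) + fR (norm d)) * snd d)"
  by (cases d) (simp add: Fint_def Tmap_def tensor_def svec_def lvec_def algebra_simps)

definition ring_point :: "real \<Rightarrow> real \<Rightarrow> real \<times> real" where
  "ring_point R \<phi> = (R * cos \<phi>, R * sin \<phi>)"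

lemma continuous_on_ring_point [continuous_intros]: "continuous_on S (ring_point R)"
  unfolding ring_point_def by (intro continuous_intros)

lemma ring_state_eq_distr:
  "ring_state R = distr (uniform_measure lborel {0..<2*pi}) borel (ring_point R)"
  by (simp add: ring_state_def ring_point_def[abs_def])

lemma measurable_ring_point:
  "ring_point R \<in> measurable (uniform_measure lborel {0..<2*pi}) borel"
  using borel_measurable_continuous_onI[OF continuous_on_ring_point]
  by (subst measurable_cong_sets[of _ lborel borel borel]) (auto simp: measurable_lborel1)

lemma norm_ring_point_diff:
  assumes "R \<ge> 0"
  shows "norm (ring_point R t - ring_point R (t + s)) = R * sqrt (2 - 2 * cos s)"
proof -
  have "(R * cos t - R * cos (t + s))\<^sup>2 + (R * sin t - R * sin (t + s))\<^sup>2
      = R\<^sup>2 * ((cos t)\<^sup>2 + (sin t)\<^sup>2 + ((cos (t + s))\<^sup>2 + (sin (t + s))\<^sup>2)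
          - 2 * (cos (t + s) * cos t + sin (t + s) * sin t))"
    by algebra
  also have "\<dots> = R\<^sup>2 * (2 - 2 * cos s)"
    using cos_diff[of "t + s" t] by simp
  finally show ?thesis
    using assms by (simp add: ring_point_def norm_Pair real_sqrt_mult)
qed

lemma integral_ring_state:
  fixes h :: "real \<times> real \<Rightarrow> real \<times> real"
  assumes h: "continuous_on UNIV h"
  shows "(\<integral>y. h y \<partial>ring_state R)
           = (1 / (2*pi)) *\<^sub>R integral {0..2*pi} (\<lambda>\<phi>. h (ring_point R \<phi>))"
proof -
  let ?S = "{0..<2*pi}"
  have hp: "continuous_on UNIV (\<lambda>\<phi>. h (ring_point R \<phi>))"
    by (rule continuous_on_compose2[OF h]) (auto intro: continuous_intros)
  have density: "uniform_measure lborel ?S = density lborel (\<lambda>x. ennreal (indicator ?S x / (2*pi)))"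
    unfolding uniform_measure_def
    by (rule arg_cong2[where f = density], simp, rule ext)
       (auto split: split_indicator simp: divide_ennreal[of 1 "2*pi", symmetric])
  have integrable: "set_integrable lborel ?S (\<lambda>\<phi>. h (ring_point R \<phi>))"
    by (rule set_integrable_subset[OF borel_integrable_atLeastAtMost'[of 0 "2*pi"]])
       (auto intro: continuous_on_subset[OF hp])
  have "(\<integral>y. h y \<partial>ring_state R) = (\<integral>\<phi>. h (ring_point R \<phi>) \<partial>uniform_measure lborel ?S)"
    unfolding ring_state_eq_distr
    by (rule integral_distr[OF measurable_ring_point borel_measurable_continuous_onI[OF h]])
  also have "\<dots> = (\<integral>\<phi>. (indicator ?S \<phi> / (2*pi)) *\<^sub>R h (ring_point R \<phi>) \<partial>lborel)"
    unfolding density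
    by (rule integral_density) (use borel_measurable_continuous_onI[OF hp] in auto)
  also have "\<dots> = (1 / (2*pi)) *\<^sub>R (\<integral>\<phi>. indicator ?S \<phi> *\<^sub>R h (ring_point R \<phi>) \<partial>lborel)"
    by (subst integral_scaleR_right[symmetric], rule Bochner_Integration.integral_cong)
       (simp_all split: split_indicator)
  also have "(\<integral>\<phi>. indicator ?S \<phi> *\<^sub>R h (ring_point R \<phi>) \<partial>lborel)
               = integral ?S (\<lambda>\<phi>. h (ring_point R \<phi>))"
    using set_borel_integral_eq_integral(2)[OF integrable] by (simp add: set_lebesgue_integral_def)
  also have "\<dots> = integral {0..2*pi} (\<lambda>\<phi>. h (ring_point R \<phi>))"
    by (rule integral_spike_set; rule negligible_subset[of "{2*pi}"]) auto
  finally show ?thesis .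
qed

lemma ring_point_in_msupport:
  assumes t: "t \<in> {0..<2*pi}"
  shows "ring_point R t \<in> msupport (ring_state R)"
  unfolding msupport_def
proof (intro CollectI allI impI)
  fix e :: real assume "e > 0"
  let ?S = "{0..<2*pi}"
  let ?B = "ball (ring_point R t) e"
  have "open (ring_point R -` ?B)"
    using continuous_on_ring_point[of UNIV R]
    by (intro continuous_open_vimage open_ball) (simp add: continuous_on_eq_continuous_at)
  then have B: "ring_point R -` ?B \<in> sets lborel" by simp
  have "continuous (at t) (ring_point R)"
    using continuous_on_ring_point[of UNIV R] by (simp add: continuous_on_eq_continuous_at)
  then obtain d where "d > 0" and d: "\<And>x. dist x t < d \<Longrightarrow> dist (ring_point R x) (ring_point R t) < e"
    unfolding continuous_at_eps_delta using \<open>e > 0\<close> by blast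
  define d' where "d' = min d (2*pi - t)"
  have "{t..<t + d'} \<subseteq> ?S \<inter> ring_point R -` ?B"
  proof
    fix x assume x: "x \<in> {t..<t + d'}"
    then have "dist (ring_point R x) (ring_point R t) < e"
      by (intro d) (auto simp: d'_def dist_real_def min_def split: if_splits)
    then show "x \<in> ?S \<inter> ring_point R -` ?B"
      using x t by (auto simp: d'_def dist_commute)
  qed
  then have "emeasure lborel {t..<t + d'} \<le> emeasure lborel (?S \<inter> ring_point R -` ?B)"
    by (rule emeasure_mono) (use B in auto)
  moreover have "emeasure lborel {t..<t + d'} > 0"
    using \<open>d > 0\<close> t by (simp add: d'_def)
  ultimately have "emeasure lborel (?S \<inter> ring_point R -` ?B) > 0"
    by order
  moreover have "emeasure (ring_state R) ?B = emeasure lborel (?S \<inter> ring_point R -` ?B) / emeasure lborel ?S"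
    unfolding ring_state_eq_distr
    using B by (subst emeasure_distr[OF measurable_ring_point]) (simp_all add: Int_commute)
  ultimately show "emeasure (ring_state R) ?B > 0"
    by (simp add: ennreal_zero_less_divide)
qed

lemma AE_sin_cos_nonzero: "AE x in lborel. sin (x::real) \<noteq> 0 \<and> cos x \<noteq> 0"
proof (rule AE_I')
  show "range (\<lambda>i::int. of_int i * pi / 2) \<in> null_sets lborel"
    by (rule countable_imp_null_set_lborel) simp
  show "{x \<in> space lborel. \<not> (sin x \<noteq> 0 \<and> cos x \<noteq> 0)} \<subseteq> range (\<lambda>i::int. of_int i * pi / 2)"
  proof
    fix x :: real assume "x \<in> {x \<in> space lborel. \<not> (sin x \<noteq> 0 \<and> cos x \<noteq> 0)}"
    then have "sin (2 * x) = 0" by (auto simp: sin_double)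
    then obtain i :: int where "2 * x = of_int i * pi" using sin_zero_iff_int2 by blast
    then show "x \<in> range (\<lambda>i::int. of_int i * pi / 2)" by (intro image_eqI[of _ _ i]) auto
  qed
qed

lemma ring_state_AE_witness:
  assumes "AE x in ring_state R. x \<in> msupport (ring_state R) \<longrightarrow> P x"
  obtains t where "t \<in> {0..<2*pi}" "sin t \<noteq> 0" "cos t \<noteq> 0" "P (ring_point R t)"
proof -
  let ?U = "uniform_measure lborel {0..<2*pi}"
  have "AE \<phi> in ?U. ring_point R \<phi> \<in> msupport (ring_state R) \<longrightarrow> P (ring_point R \<phi>)"
    using AE_distrD[OF measurable_ring_point] assms unfolding ring_state_eq_distr by blast
  moreover have "AE \<phi> in ?U. \<phi> \<in> {0..<2*pi} \<and> sin \<phi> \<noteq> 0 \<and> cos \<phi> \<noteq> 0"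
  proof (rule AE_uniform_measureI)
    show "AE \<phi> in lborel. \<phi> \<in> {0..<2*pi} \<longrightarrow> \<phi> \<in> {0..<2*pi} \<and> sin \<phi> \<noteq> 0 \<and> cos \<phi> \<noteq> 0"
      using AE_sin_cos_nonzero by eventually_elim blast
  qed simp
  ultimately have witnesses:
      "AE \<phi> in ?U. \<phi> \<in> {0..<2*pi} \<and> sin \<phi> \<noteq> 0 \<and> cos \<phi> \<noteq> 0 \<and> P (ring_point R \<phi>)"
    by eventually_elim (use ring_point_in_msupport in blast)
  have "prob_space ?U"
    by (rule prob_space_uniform_measure) simp_all
  from eventually_happens'[OF prob_space.ae_filter_bot[OF this] witnesses] show ?thesis
    using that by blast
qed

lemma integral_Pair_components:
  fixes f :: "'a::euclidean_space \<Rightarrow> real \<times> real"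
  assumes "f integrable_on S"
  shows "integral S f = (integral S (\<lambda>x. fst (f x)), integral S (\<lambda>x. snd (f x)))"
  using integral_linear[OF assms bounded_linear_fst] integral_linear[OF assms bounded_linear_snd]
  by (simp add: o_def prod_eq_iff)

lemma integral_shift_periodic:
  fixes h :: "real \<Rightarrow> 'a::euclidean_space"
  assumes h: "continuous_on UNIV h" and periodic: "\<And>x. h (x + c) = h x" and t: "0 \<le> t" "t \<le> c"
  shows "integral {0..c} (\<lambda>\<psi>. h (t + \<psi>)) = integral {0..c} h"
proof -
  have integrable: "h integrable_on {a..b}" for a b
    by (rule integrable_continuous_real) (rule continuous_on_subset[OF h], simp)
  have "integral {0..c} (\<lambda>\<psi>. h (t + \<psi>)) = integral {t..t + c} h"
    using integral_shift_Icc_real[of 0 c h t] by (simp add: o_def add.commute)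
  also have "\<dots> = integral {t..c} h + integral {c..c + t} h"
    using Henstock_Kurzweil_Integration.integral_combine[of t c "t + c" h] integrable t by (simp add: add.commute)
  also have "integral {c..c + t} h = integral {0..t} h"
    using integral_shift_Icc_real[of 0 t h c] periodic by (simp add: o_def add.commute)
  also have "integral {t..c} h + integral {0..t} h = integral {0..c} h"
    using Henstock_Kurzweil_Integration.integral_combine[of 0 t c h] integrable t by (metis add.commute)
  finally show ?thesis .
qed

lemma integral_antisymmetric_eq_0:
  fixes q :: "real \<Rightarrow> real"
  assumes q: "continuous_on UNIV q" and antisymmetric: "\<And>x. q (c - x) = - q x"
  shows "integral {0..c} q = 0"
proof -
  have "- integral {0..c} q = integral {0..c} (\<lambda>x. q (c - x))"
    by (simp add: antisymmetric integral_neg)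
  also have "\<dots> = integral {-c..0} (\<lambda>y. q (-y))"
    using integral_shift_Icc_real[of 0 c "\<lambda>y. q (-y)" "-c"] by (simp add: o_def)
  also have "\<dots> = integral {0..c} q"
    using Henstock_Kurzweil_Integration.integral_reflect_real[of c 0 q] by simp
  finally show ?thesis by simp
qed

text \<open>\<open>R \<surd>(2 - 2 cos \<psi>)\<close> is the distance between two points of the ring of radius \<open>R\<close>
at angular distance \<open>\<psi>\<close>.\<close>

definition ring_moment :: "(real \<Rightarrow> real) \<Rightarrow> real \<Rightarrow> real" where
  "ring_moment g R = integral {0..2*pi} (\<lambda>\<psi>. g (R * sqrt (2 - 2 * cos \<psi>)) * (1 - cos \<psi>))"

lemma continuous_on_chord_comp:
  assumes "continuous_on {0..} g" "R \<ge> 0"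
  shows "continuous_on UNIV (\<lambda>\<psi>. g (R * sqrt (2 - 2 * cos \<psi>)))"
  by (rule continuous_on_compose2[OF assms(1)]) (use assms(2) in \<open>auto intro!: continuous_intros\<close>)

lemma ring_moment_lincomb:
  assumes "continuous_on {0..} f" "continuous_on {0..} g" "R \<ge> 0"
  shows "ring_moment (\<lambda>\<rho>. a * f \<rho> + b * g \<rho>) R = a * ring_moment f R + b * ring_moment g R"
proof -
  have "(\<lambda>\<psi>. h (R * sqrt (2 - 2 * cos \<psi>)) * (1 - cos \<psi>)) integrable_on {0..2*pi}"
    if "continuous_on {0..} h" for h
    by (intro integrable_continuous_real continuous_intros continuous_on_subset[OF
          continuous_on_chord_comp[OF that \<open>R \<ge> 0\<close>]]) simp
  then show ?thesis
    using assms unfolding ring_moment_def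
    by (simp add: distrib_right mult.assoc integral_add integrable_on_mult_right)
qed

lemma ring_moment_pos:
  assumes g: "continuous_on {0..} g" and nonneg: "\<And>\<rho>. \<rho> \<ge> 0 \<Longrightarrow> g \<rho> \<ge> 0"
    and "g (R * sqrt 2) \<noteq> 0" and R: "R \<ge> 0"
  shows "ring_moment g R > 0"
proof -
  define w where "w \<psi> = g (R * sqrt (2 - 2 * cos \<psi>)) * (1 - cos \<psi>)" for \<psi>
  have w: "continuous_on UNIV w"
    unfolding w_def[abs_def] by (intro continuous_intros continuous_on_chord_comp[OF g R])
  have w_nonneg: "w \<psi> \<ge> 0" for \<psi>
    unfolding w_def using nonneg R by (simp add: cos_le_one)
  have "w integrable_on {0..2*pi}"
    by (intro integrable_continuous_real continuous_on_subset[OF w]) simp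
  then have w_integral: "(w has_integral ring_moment g R) {0..2*pi}"
    unfolding ring_moment_def w_def[symmetric] by (rule integrable_integral)
  have "ring_moment g R \<ge> 0"
    using w_integral w_nonneg by (rule has_integral_nonneg)
  moreover have "ring_moment g R \<noteq> 0"
  proof
    assume "ring_moment g R = 0"
    have "w (pi/2) = 0"
    proof (rule has_integral_0_closure_imp_0[of "{0<..<2*pi}" w])
      show "(w has_integral 0) (closure {0<..<2*pi})"
        using w_integral \<open>ring_moment g R = 0\<close> by simp
    qed (auto intro: continuous_on_subset[OF w] w_nonneg)
    then show False
      using \<open>g (R * sqrt 2) \<noteq> 0\<close> by (simp add: w_def)
  qed
  ultimately show ?thesis by simp
qed

lemma strict_antimono_on_nonneg_imp_pos:
  fixes f :: "real \<Rightarrow> real"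
  assumes "strict_antimono_on {a..b} f" "f b \<ge> 0" "a \<le> x" "x < b"
  shows "f x > 0"
  using monotone_onD[OF assms(1), of x b] assms(2-4) by auto

lemma integral_chord_weighted_displacement:
  assumes "continuous_on {0..} g" "R \<ge> 0"
  shows "integral {0..2*pi} (\<lambda>\<psi>. g (R * sqrt (2 - 2 * cos \<psi>)) * (R * cos t - R * cos (t + \<psi>)))
           = R * cos t * ring_moment g R"
    and "integral {0..2*pi} (\<lambda>\<psi>. g (R * sqrt (2 - 2 * cos \<psi>)) * (R * sin t - R * sin (t + \<psi>)))
           = R * sin t * ring_moment g R"
proof -
  define G where "G \<psi> = g (R * sqrt (2 - 2 * cos \<psi>))" for \<psi>
  have G: "continuous_on UNIV G"
    unfolding G_def[abs_def] by (rule continuous_on_chord_comp[OF assms])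
  have integrable: "(\<lambda>\<psi>. G \<psi> * (1 - cos \<psi>)) integrable_on {0..2*pi}"
    "(\<lambda>\<psi>. G \<psi> * sin \<psi>) integrable_on {0..2*pi}"
    by (intro integrable_continuous_real continuous_intros continuous_on_subset[OF G], simp)+
  have "G (2*pi - \<psi>) = G \<psi>" for \<psi>
    by (simp add: G_def)
  then have odd_part: "integral {0..2*pi} (\<lambda>\<psi>. G \<psi> * sin \<psi>) = 0"
    by (intro integral_antisymmetric_eq_0 continuous_intros G) simp
  have "G \<psi> * (R * cos t - R * cos (t + \<psi>))
      = R * cos t * (G \<psi> * (1 - cos \<psi>)) + R * sin t * (G \<psi> * sin \<psi>)"
       "G \<psi> * (R * sin t - R * sin (t + \<psi>))
      = R * sin t * (G \<psi> * (1 - cos \<psi>)) - R * cos t * (G \<psi> * sin \<psi>)" for \<psi>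
    by (simp_all add: cos_add sin_add algebra_simps)
  then show "integral {0..2*pi} (\<lambda>\<psi>. G \<psi> * (R * cos t - R * cos (t + \<psi>)))
           = R * cos t * ring_moment g R"
    and "integral {0..2*pi} (\<lambda>\<psi>. G \<psi> * (R * sin t - R * sin (t + \<psi>)))
           = R * sin t * ring_moment g R"
    using integrable odd_part unfolding ring_moment_def G_def[symmetric]
    by (simp_all add: integral_add integral_diff integrable_on_mult_right)
qed

lemma mean_field_at_ring_point:
  assumes fA: "continuous_on {0..} fA" and fR: "continuous_on {0..} fR"
    and R: "R \<ge> 0" and t: "t \<in> {0..<2*pi}"
  shows "(\<integral>y. Fint fA fR chi (ring_point R t - y) \<partial>ring_state R)
           = (1 / (2*pi)) *\<^sub>R (R * cos t * ring_moment (\<lambda>\<rho>. fA \<rho> + fR \<rho>) R,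
                              R * sin t * ring_moment (\<lambda>\<rho>. chi * fA \<rho> + fR \<rho>) R)"
proof -
  let ?h = "\<lambda>\<phi>. Fint fA fR chi (ring_point R t - ring_point R \<phi>)"
  have field: "continuous_on UNIV (\<lambda>y. Fint fA fR chi (ring_point R t - y))"
    by (rule continuous_on_compose2[OF continuous_on_Fint[OF fA fR]])
       (auto intro!: continuous_intros)
  have h: "continuous_on UNIV ?h"
    by (rule continuous_on_compose2[OF field continuous_on_ring_point]) auto
  have "(\<integral>y. Fint fA fR chi (ring_point R t - y) \<partial>ring_state R)
          = (1 / (2*pi)) *\<^sub>R integral {0..2*pi} ?h"
    by (rule integral_ring_state[OF field])
  also have "integral {0..2*pi} ?h = integral {0..2*pi} (\<lambda>\<psi>. ?h (t + \<psi>))"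
    using t by (intro integral_shift_periodic[OF h, symmetric]) (auto simp: ring_point_def)
  also have "(\<lambda>\<psi>. ?h (t + \<psi>)) = (\<lambda>\<psi>.
      ((fA (R * sqrt (2 - 2 * cos \<psi>)) + fR (R * sqrt (2 - 2 * cos \<psi>)))
         * (R * cos t - R * cos (t + \<psi>)),
       (chi * fA (R * sqrt (2 - 2 * cos \<psi>)) + fR (R * sqrt (2 - 2 * cos \<psi>)))
         * (R * sin t - R * sin (t + \<psi>))))"
    unfolding Fint_components norm_ring_point_diff[OF R] by (simp add: ring_point_def)
  also have "integral {0..2*pi} \<dots>
      = (R * cos t * ring_moment (\<lambda>\<rho>. fA \<rho> + fR \<rho>) R,
         R * sin t * ring_moment (\<lambda>\<rho>. chi * fA \<rho> + fR \<rho>) R)"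
    by (subst integral_Pair_components)
       (auto intro!: integrable_continuous_real continuous_intros integral_chord_weighted_displacement
          continuous_on_subset[OF continuous_on_chord_comp[OF fA R]]
          continuous_on_subset[OF continuous_on_chord_comp[OF fR R]] fA fR R)
  finally show ?thesis .
qed

lemma ring_moments_eq_0_if_equilibrium:
  assumes fA: "continuous_on {0..} fA" and fR: "continuous_on {0..} fR" and R: "R > 0"
    and "equilibrium_state (Fint fA fR chi) (ring_state R)"
  shows "ring_moment (\<lambda>\<rho>. fA \<rho> + fR \<rho>) R = 0" "ring_moment (\<lambda>\<rho>. chi * fA \<rho> + fR \<rho>) R = 0"
proof -
  have "AE x in ring_state R. x \<in> msupport (ring_state R) \<longrightarrow>
          (\<integral>y. Fint fA fR chi (x - y) \<partial>ring_state R) = 0"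
    using assms(4) unfolding equilibrium_state_def Let_def by blast
  then obtain t where t: "t \<in> {0..<2*pi}" "sin t \<noteq> 0" "cos t \<noteq> 0"
    and field_zero: "(\<integral>y. Fint fA fR chi (ring_point R t - y) \<partial>ring_state R) = 0"
    by (rule ring_state_AE_witness)
  have "(1 / (2*pi)) *\<^sub>R (R * cos t * ring_moment (\<lambda>\<rho>. fA \<rho> + fR \<rho>) R,
                           R * sin t * ring_moment (\<lambda>\<rho>. chi * fA \<rho> + fR \<rho>) R) = 0"
    using mean_field_at_ring_point[OF fA fR less_imp_le[OF R] t(1), of chi] field_zero by simp
  then show "ring_moment (\<lambda>\<rho>. fA \<rho> + fR \<rho>) R = 0" "ring_moment (\<lambda>\<rho>. chi * fA \<rho> + fR \<rho>) R = 0"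
    using t R by (simp_all add: zero_prod_def)
qed

theorem proposition3p6:
  fixes fA fR :: "real \<Rightarrow> real" and d_a d_e chi :: real
  assumes smooth_R: "smooth_on {0..} fR" and smooth_A: "smooth_on {0..} fA"
    and int_R: "set_integrable lborel {0..} fR" and int_A: "set_integrable lborel {0..} fA"
    and fR_nonneg: "\<forall>\<rho>\<ge>0. fR \<rho> \<ge> 0" and fA_nonpos: "\<forall>\<rho>\<ge>0. fA \<rho> \<le> 0"
    and d_a_pos: "d_a > 0"
    and sign_far: "\<forall>\<rho>>d_a. fA \<rho> + fR \<rho> \<le> 0"
    and sign_near: "\<forall>\<rho>. 0 \<le> \<rho> \<and> \<rho> < d_a \<longrightarrow> fA \<rho> + fR \<rho> > 0"
    and chi: "chi \<in> {0..<1}"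
    and F_C1: "\<exists>F' :: real \<times> real \<Rightarrow> ((real \<times> real) \<Rightarrow>\<^sub>L (real \<times> real)).
                 (\<forall>x. (Fint fA fR chi has_derivative blinfun_apply (F' x)) (at x)) \<and>
                 continuous_on UNIV F' \<and> bounded (range F')"
    and d_e: "d_e > d_a"
    and decr: "\<forall>chi'\<in>{0..1}. strict_antimono_on {0..d_e} (\<lambda>\<rho>. chi' * fA \<rho> + fR \<rho>)"
  shows "\<not> (\<exists>R\<in>{0<..d_e/2}. equilibrium_state (Fint fA fR chi) (ring_state R))"
proof
  assume "\<exists>R\<in>{0<..d_e/2}. equilibrium_state (Fint fA fR chi) (ring_state R)"
  then obtain R where R: "0 < R" "R \<le> d_e/2"
    and equilibrium: "equilibrium_state (Fint fA fR chi) (ring_state R)" by auto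
  have fA: "continuous_on {0..} fA" and fR: "continuous_on {0..} fR"
    using smooth_A smooth_R by (simp_all add: smooth_on_imp_continuous_on)
  note moments = ring_moments_eq_0_if_equilibrium[OF fA fR R(1) equilibrium]
  have "ring_moment (\<lambda>\<rho>. (1 - chi) * fR \<rho>) R
          = ring_moment (\<lambda>\<rho>. 1 * (chi * fA \<rho> + fR \<rho>) + (- chi) * (fA \<rho> + fR \<rho>)) R"
    by (intro arg_cong[where f = "\<lambda>f. ring_moment f R"] ext) (simp add: algebra_simps)
  also have "\<dots> = 0"
    using R(1) by (subst ring_moment_lincomb) (auto intro!: continuous_intros fA fR simp: moments)
  finally have moment_zero: "ring_moment (\<lambda>\<rho>. (1 - chi) * fR \<rho>) R = 0" .
  have "fR (R * sqrt 2) > 0"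
  proof (rule strict_antimono_on_nonneg_imp_pos[where f = fR and x = "R * sqrt 2"])
    show "strict_antimono_on {0..d_e} fR"
      using bspec[OF decr, of 0] by simp
    show "fR d_e \<ge> 0"
      using fR_nonneg d_e d_a_pos by simp
    show "0 \<le> R * sqrt 2"
      using R(1) by simp
    have "R * sqrt 2 < R * 2"
      using R(1) sqrt2_less_2 by simp
    then show "R * sqrt 2 < d_e"
      using R(2) by linarith
  qed
  then have "(1 - chi) * fR (R * sqrt 2) \<noteq> 0"
    using chi by simp
  moreover have "(1 - chi) * fR \<rho> \<ge> 0" if "\<rho> \<ge> 0" for \<rho>
    using chi fR_nonneg that by simp
  ultimately have "ring_moment (\<lambda>\<rho>. (1 - chi) * fR \<rho>) R > 0"
    using R(1) by (intro ring_moment_pos continuous_on_mult_left fR) auto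
  with moment_zero show False by simp
qed

end
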